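(* Let $k\geq0$, $q\geq1$, $m\ge1$ and $\gamma=(\gamma_1,\ldots,\gamma_m)\in\mathbb{Z}^m$ with $\gamma_1\ge 2$ and $2\le\gamma_{i+1}\le\gamma_i+1$ for all $1\le i<m$. Then \[F^{2143}(k,q,\gamma)=\begin{cases} s^k & m=1,\\ F^{2143}(0,q{-}1,\gamma)+F^{2143}(\gamma_1{+}1{-}\gamma_2,q,\gamma') & m\geq2,\ k=0,\\ sF^{2143}(k{-}1,q,\gamma)+sF^{2143}(\gamma_1{+}1{-}\gamma_2{+}k,q,\gamma')-sF^{2143}(\gamma_1{-}\gamma_2{+}k,q,\gamma') & m\geq2,\ k\geq1. \end{cases}\]
   Context: Define $\mathrm{suc}^{2143}$ on integer triples by $\mathrm{suc}^{2143}(x,y,z)=\emptyset$ if $z\le 0$ and, for $z\ge1$, $\mathrm{suc}^{2143}(x,y,z)=\{(2,y{+}1,z),\ldots,(x{+}1,y{+}1,z)\}\cup\{(x,x{+}1,z),\ldots,(x,y,z)\}\cup\mathrm{suc}^{2143}(x,x,z{-}1)$ (second set empty if $y\le x$). A path in $\mathcal{P}^{2143}$ is a finite sequence $P=(v_1,\ldots,v_r)$, $r\ge1$, of points of $\mathbb{Z}^3$ with $v_1=(x,y,z)$ satisfying $2\le x\le y$, $z\ge1$, and $v_{i+1}\in\mathrm{suc}^{2143}(v_i)$ for all $i$; its length is $\ell(P)=r$. An edge $v_i\to v_{i+1}$ from $(x_1,y_1,z_1)$ to $(x_2,y_2,z_2)$ is recorded if either $z_1=z_2$ and $y_2=y_1+1$,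 or $z_1>z_2$. The signature $\mathrm{sig}(P)$ is the tuple consisting of the $x$-coordinate of $v_1$ followed by the $x$-coordinates of the endpoints of the recorded edges, in order. For $k\ge0$, $q\ge1$, $\gamma\in\mathbb{Z}^m$, $m\ge1$, let $\mathcal{P}^{2143}_{k,q,\gamma}$ be the set of paths in $\mathcal{P}^{2143}$ starting at $(\gamma_1,\gamma_1+k,q)$ with signature $\gamma$, and $F^{2143}(k,q,\gamma)=\sum_{P\in\mathcal{P}^{2143}_{k,q,\gamma}}t^{\ell(P)-m}$, a formal power series in $t$. By convention $F^{2143}(k,q,\gamma)=0$ if $q\le0$ or $\gamma$ is the empty tuple. Write $s=1/(1-t)=1+t+t^2+\cdots$ and $\gamma'=(\gamma_2,\ldots,\gamma_m)$ (empty if $m=1$). *)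

theory Defs
  imports "HOL-Computational_Algebra.Formal_Power_Series"
begin

type_synonym pt = "int \<times> int \<times> int"

function suc2143 :: "pt \<Rightarrow> pt set" where
  "suc2143 (x, y, z) =
     (if z \<le> 0 then {}
      else {(a, y + 1, z) | a. 2 \<le> a \<and> a \<le> x + 1}
         \<union> {(x, b, z) | b. x + 1 \<le> b \<and> b \<le> y}
         \<union> suc2143 (x, x, z - 1))"
  by pat_completeness auto
termination by (relation "measure (\<lambda>(x, y, z). nat z)") auto

definition is_path2143 :: "pt list \<Rightarrow> bool" where
  "is_path2143 P \<longleftrightarrow> P \<noteq> [] \<and>
     (case hd P of (x, y, z) \<Rightarrow> 2 \<le> x \<and> x \<le> y \<and> 1 \<le> z) \<and>
     (\<forall>i. Suc i < length P \<longrightarrow> P ! Suc i \<in> suc2143 (P ! i))"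

definition recorded2143 :: "pt \<Rightarrow> pt \<Rightarrow> bool" where
  "recorded2143 u v \<longleftrightarrow>
     (case u of (x1, y1, z1) \<Rightarrow> case v of (x2, y2, z2) \<Rightarrow>
        (z1 = z2 \<and> y2 = y1 + 1) \<or> z1 > z2)"

definition sig2143 :: "pt list \<Rightarrow> int list" where
  "sig2143 P = fst (hd P) # map (\<lambda>(u, v). fst v) (filter (\<lambda>(u, v). recorded2143 u v) (zip P (tl P)))"

definition F2143 :: "nat \<Rightarrow> int \<Rightarrow> int list \<Rightarrow> int fps" where
  "F2143 k q \<gamma> =
     (if q \<le> 0 \<or> \<gamma> = [] then 0
      else Abs_fps (\<lambda>n. int (card {P. is_path2143 P \<and> hd P = (\<gamma> ! 0, \<gamma> ! 0 + int k, q)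
                                   \<and> sig2143 P = \<gamma> \<and> length P = n + length \<gamma>})))"

text \<open>s = 1/(1-t) = 1 + t + t^2 + ...\<close>
definition s2143 :: "int fps" where
  "s2143 = Abs_fps (\<lambda>n. 1)"

end

theory Submission
  imports Defs
begin

text \<open>Split a path at its first edge. From (x, x + k, q) the unrecorded successors are the points
  (x, x + j, q) with 1 \<le> j \<le> k: they keep the signature and use up one unit of the exponent.
  The recorded successors with first coordinate g = gamma_2 are (g, x + k + 1, q) and the diagonal
  points (g, x + 1, z) with z < q. Hence F(k, q, gamma) = B k + t * (sum over 1 \<le> j \<le> k of
  F(j, q, gamma)), where B k = 1 if m = 1 and otherwise
  B k = F(x + 1 - g + k, q, gamma') + (sum over 1 \<le> z < q of F(x + 1 - g, z, gamma')).
  Subtracting consecutive instances gives (1 - t) F(k + 1, q, gamma) = F(k, q, gamma) + B (k + 1) - B k,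
  and for k = 0 the sum over z telescopes in q.\<close>

declare suc2143.simps [simp del]

lemma suc2143_nonpos: "z \<le> 0 \<Longrightarrow> suc2143 (x, y, z) = {}"
  by (simp add: suc2143.simps)

lemma suc2143_diagonal:
  "suc2143 (x, x, z) = {(a, x + 1, z') | a z'. 2 \<le> a \<and> a \<le> x + 1 \<and> 1 \<le> z' \<and> z' \<le> z}"
proof (induction "nat z" arbitrary: z)
  case 0
  then show ?case by (auto simp: suc2143_nonpos)
next
  case (Suc m)
  then have "0 < z"
    and "suc2143 (x, x, z - 1) = {(a, x + 1, z') | a z'. 2 \<le> a \<and> a \<le> x + 1 \<and> 1 \<le> z' \<and> z' \<le> z - 1}"
    by auto
  then show ?case
    by (subst suc2143.simps) force
qed

lemma suc2143_eq:
  assumes "0 < z"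
  shows "suc2143 (x, y, z) = (\<lambda>a. (a, y + 1, z)) ` {2..x + 1} \<union> (\<lambda>b. (x, b, z)) ` {x + 1..y}
           \<union> {(a, x + 1, z') | a z'. 2 \<le> a \<and> a \<le> x + 1 \<and> 1 \<le> z' \<and> z' < z}"
  using assms by (subst suc2143.simps) (auto simp: suc2143_diagonal)

lemma finite_suc2143: "finite (suc2143 v)"
proof -
  obtain x y z where v: "v = (x, y, z)" by (cases v)
  have "{(a, x + 1, z') | a z'. 2 \<le> a \<and> a \<le> x + 1 \<and> 1 \<le> z' \<and> z' < z}
          = (\<lambda>(a, z'). (a, x + 1, z')) ` ({2..x + 1} \<times> {1..<z})"
    by force
  then show ?thesis
    unfolding v by (cases "0 < z") (simp_all add: suc2143_eq suc2143_nonpos)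
qed

lemma recorded_succs2143:
  assumes "0 < z"
  shows "{w \<in> suc2143 (x, y, z). recorded2143 (x, y, z) w}
           = (\<lambda>a. (a, y + 1, z)) ` {2..x + 1}
             \<union> {(a, x + 1, z') | a z'. 2 \<le> a \<and> a \<le> x + 1 \<and> 1 \<le> z' \<and> z' < z}"
  using assms by (auto simp: suc2143_eq recorded2143_def)

lemma unrecorded_succs2143:
  assumes "0 < z"
  shows "{w \<in> suc2143 (x, y, z). \<not> recorded2143 (x, y, z) w} = (\<lambda>b. (x, b, z)) ` {x + 1..y}"
  using assms by (auto simp: suc2143_eq recorded2143_def)

lemma fst_unrecorded_succ2143:
  assumes "w \<in> suc2143 v" and "\<not> recorded2143 v w"
  shows "fst w = fst v"
proof -
  obtain x y z where v: "v = (x, y, z)" by (cases v)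
  with assms(1) have "0 < z" by (metis suc2143_nonpos empty_iff not_less)
  with assms have "w \<in> (\<lambda>b. (x, b, z)) ` {x + 1..y}"
    unfolding v unrecorded_succs2143[OF \<open>0 < z\<close>, symmetric] by blast
  then show ?thesis unfolding v by auto
qed

lemma sig2143_singleton [simp]: "sig2143 [v] = [fst v]"
  by (simp add: sig2143_def)

lemma sig2143_Cons_Cons:
  "sig2143 (v # w # P) =
     fst v # (if recorded2143 v w then sig2143 (w # P) else tl (sig2143 (w # P)))"
  by (simp add: sig2143_def)

lemma sig2143_neq_Nil [simp]: "sig2143 P \<noteq> []"
  by (simp add: sig2143_def)

lemma hd_sig2143 [simp]: "hd (sig2143 P) = fst (hd P)"
  by (simp add: sig2143_def)

lemma length_sig2143_le: "P \<noteq> [] \<Longrightarrow> length (sig2143 P) \<le> length P"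
  by (induction P rule: induct_list012) (auto simp: sig2143_Cons_Cons)

definition paths2143 :: "pt \<Rightarrow> int list \<Rightarrow> nat \<Rightarrow> pt list set" where
  "paths2143 v \<gamma> n = {P. P \<noteq> [] \<and> hd P = v \<and> successively (\<lambda>u w. w \<in> suc2143 u) P
                        \<and> sig2143 P = \<gamma> \<and> length P = n + length \<gamma>}"

lemma paths2143_Nil [simp]: "paths2143 v [] n = {}"
  by (auto simp: paths2143_def)

lemma paths2143_eq_empty: "fst v \<noteq> g \<Longrightarrow> paths2143 v (g # \<gamma>) n = {}"
  by (auto simp: paths2143_def dest: arg_cong[of _ _ hd])

lemma hd_tl_in_paths2143: "P \<in> paths2143 v \<gamma> n \<Longrightarrow> P = v # tl P"
  by (auto simp: paths2143_def)

lemma paths2143_disjoint: "v \<noteq> w \<Longrightarrow> paths2143 v \<gamma> n \<inter> paths2143 w \<gamma>' n' = {}"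
  by (auto simp: paths2143_def)

lemma singleton_in_paths2143:
  "[u] \<in> paths2143 v \<gamma> n \<longleftrightarrow> u = v \<and> \<gamma> = [fst v] \<and> n = 0"
  by (auto simp: paths2143_def)

lemma Cons_Cons_in_paths2143:
  assumes "fst v = g"
  shows "u # w # P \<in> paths2143 v (g # \<gamma>) n \<longleftrightarrow> u = v \<and> w \<in> suc2143 v \<and>
           (if recorded2143 v w then w # P \<in> paths2143 w \<gamma> n
            else 0 < n \<and> w # P \<in> paths2143 w (g # \<gamma>) (n - 1))"
    (is "_ \<longleftrightarrow> ?rhs")
proof (cases "recorded2143 v w")
  case True
  with assms show ?thesis by (auto simp: paths2143_def sig2143_Cons_Cons)
next
  case False
  show ?thesis
  proof
    assume P: "u # w # P \<in> paths2143 v (g # \<gamma>) n"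
    then have "w \<in> suc2143 v" and "u = v" by (auto simp: paths2143_def)
    with False assms have "hd (sig2143 (w # P)) = g"
      by (simp add: fst_unrecorded_succ2143)
    moreover have "tl (sig2143 (w # P)) = \<gamma>"
      using P False \<open>u = v\<close> by (simp add: paths2143_def sig2143_Cons_Cons)
    ultimately have sig: "sig2143 (w # P) = g # \<gamma>"
      by (metis list.collapse sig2143_neq_Nil)
    moreover have "length (g # \<gamma>) \<le> length (w # P)"
      using length_sig2143_le[of "w # P"] sig by simp
    ultimately show ?rhs
      using P False \<open>u = v\<close> \<open>w \<in> suc2143 v\<close> by (auto simp: paths2143_def)
  next
    assume ?rhs
    with False assms show "u # w # P \<in> paths2143 v (g # \<gamma>) n"
      by (auto simp: paths2143_def sig2143_Cons_Cons)
  qed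
qed

lemma paths2143_Cons:
  assumes "fst v = g"
  shows "paths2143 v (g # \<gamma>) n = (if \<gamma> = [] \<and> n = 0 then {[v]} else {})
     \<union> Cons v ` (\<Union>w \<in> {w \<in> suc2143 v. recorded2143 v w}. paths2143 w \<gamma> n)
     \<union> (if 0 < n then Cons v ` (\<Union>w \<in> {w \<in> suc2143 v. \<not> recorded2143 v w}. paths2143 w (g # \<gamma>) (n - 1))
        else {})"
    (is "?lhs = ?rhs")
proof (rule set_eqI)
  fix P
  show "P \<in> ?lhs \<longleftrightarrow> P \<in> ?rhs"
  proof (cases P rule: remdups_adj.cases)
    case (3 u w P')
    then show ?thesis
      using assms by (auto simp: Cons_Cons_in_paths2143 dest: hd_tl_in_paths2143)
  qed (use assms in \<open>auto simp: singleton_in_paths2143 paths2143_def\<close>)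
qed

lemma finite_paths2143: "finite (paths2143 v \<gamma> n)"
proof (induction "n + length \<gamma>" arbitrary: v \<gamma> n rule: less_induct)
  case less
  show ?case
  proof (cases \<gamma>)
    case (Cons g \<gamma>')
    then show ?thesis
      using less finite_suc2143
      by (cases "fst v = g") (auto simp: paths2143_Cons paths2143_eq_empty)
  qed simp
qed

lemma card_paths2143_Cons:
  assumes "fst v = g"
  shows "card (paths2143 v (g # \<gamma>) n) = (if \<gamma> = [] \<and> n = 0 then 1 else 0)
     + (\<Sum>w \<in> {w \<in> suc2143 v. recorded2143 v w}. card (paths2143 w \<gamma> n))
     + (if 0 < n then \<Sum>w \<in> {w \<in> suc2143 v. \<not> recorded2143 v w}. card (paths2143 w (g # \<gamma>) (n - 1))
        else 0)"
proof -
  let ?R = "{w \<in> suc2143 v. recorded2143 v w}" and ?N = "{w \<in> suc2143 v. \<not> recorded2143 v w}"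
  let ?A = "(if \<gamma> = [] \<and> n = 0 then {[v]} else {}) :: pt list set"
  let ?B = "Cons v ` (\<Union>w \<in> ?R. paths2143 w \<gamma> n)"
  let ?C = "if 0 < n then Cons v ` (\<Union>w \<in> ?N. paths2143 w (g # \<gamma>) (n - 1)) else {}"
  have card_UN: "card (\<Union>w \<in> W. paths2143 w \<gamma>' n') = (\<Sum>w \<in> W. card (paths2143 w \<gamma>' n'))"
    if "W \<subseteq> suc2143 v" for W \<gamma>' n'
    using finite_subset[OF that finite_suc2143]
    by (intro card_UN_disjoint) (auto simp: finite_paths2143 paths2143_disjoint)
  have "?A \<inter> ?B = {}" and "(?A \<union> ?B) \<inter> ?C = {}"
    by (auto simp: paths2143_def dest: hd_tl_in_paths2143)
  moreover have "finite ?B" and "finite ?C"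
    using finite_suc2143 by (auto simp: finite_paths2143)
  ultimately have "card (?A \<union> ?B \<union> ?C) = card ?A + card ?B + card ?C"
    by (simp add: card_Un_disjoint)
  then show ?thesis
    unfolding paths2143_Cons[OF assms] by (simp add: card_image card_UN)
qed

lemma sum_recorded_succs2143:
  assumes "0 < z" and "2 \<le> g" and "g \<le> x + 1" and "\<And>w. fst w \<noteq> g \<Longrightarrow> f w = 0"
  shows "(\<Sum>w \<in> {w \<in> suc2143 (x, y, z). recorded2143 (x, y, z) w}. f w)
           = f (g, y + 1, z) + (\<Sum>z' \<in> {1..z - 1}. f (g, x + 1, z'))"
proof -
  let ?R = "{w \<in> suc2143 (x, y, z). recorded2143 (x, y, z) w}"
  let ?D = "(\<lambda>z'. (g, x + 1, z')) ` {1..z - 1}"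
  have R_g: "{w \<in> ?R. fst w = g} = insert (g, y + 1, z) ?D"
    using assms(1-3) by (auto simp: recorded_succs2143)
  have "sum f ?R = sum f {w \<in> ?R. fst w = g}"
    using finite_suc2143 by (intro sum.mono_neutral_right) (auto simp: assms(4))
  also have "\<dots> = f (g, y + 1, z) + sum f ?D"
    unfolding R_g by (rule sum.insert) auto
  also have "sum f ?D = (\<Sum>z' \<in> {1..z - 1}. f (g, x + 1, z'))"
    by (rule sum.reindex_cong[where l = "\<lambda>z'. (g, x + 1, z')"]) (auto simp: inj_on_def)
  finally show ?thesis .
qed

lemma sum_unrecorded_succs2143:
  assumes "0 < z"
  shows "(\<Sum>w \<in> {w \<in> suc2143 (x, x + int k, z). \<not> recorded2143 (x, x + int k, z) w}. f w)
           = (\<Sum>j \<in> {1..k}. f (x, x + int j, z))"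
proof -
  have "{x + 1..x + int k} = (\<lambda>j. x + int j) ` {1..k}"
    by (simp add: image_image[symmetric, of "(+) x" int] image_int_atLeastAtMost add.commute)
  then have "{w \<in> suc2143 (x, x + int k, z). \<not> recorded2143 (x, x + int k, z) w}
               = (\<lambda>j. (x, x + int j, z)) ` {1..k}"
    unfolding unrecorded_succs2143[OF assms] by auto
  then show ?thesis
    by (simp add: sum.reindex inj_on_def)
qed

lemma card_paths2143_start:
  assumes "0 < q"
  shows "card (paths2143 (x, x + int k, q) (x # \<gamma>) n) = (if \<gamma> = [] \<and> n = 0 then 1 else 0)
     + (\<Sum>w \<in> {w \<in> suc2143 (x, x + int k, q). recorded2143 (x, x + int k, q) w}. card (paths2143 w \<gamma> n))
     + (if 0 < n then \<Sum>j \<in> {1..k}. card (paths2143 (x, x + int j, q) (x # \<gamma>) (n - 1)) else 0)"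
  using card_paths2143_Cons[of "(x, x + int k, q)" x \<gamma> n] by (simp add: sum_unrecorded_succs2143[OF assms])

lemma F2143_eq_Abs_fps_card:
  assumes "1 \<le> q" and "2 \<le> x"
  shows "F2143 k q (x # \<gamma>) = Abs_fps (\<lambda>n. int (card (paths2143 (x, x + int k, q) (x # \<gamma>) n)))"
proof -
  have "{P. is_path2143 P \<and> hd P = (x, x + int k, q) \<and> sig2143 P = x # \<gamma> \<and> length P = n + length (x # \<gamma>)}
          = paths2143 (x, x + int k, q) (x # \<gamma>) n" for n
    using assms by (auto simp: is_path2143_def paths2143_def successively_conv_nth)
  with assms show ?thesis by (simp add: F2143_def)
qed

lemma F2143_singleton_rec:
  assumes "1 \<le> q" and "2 \<le> x"
  shows "F2143 k q [x] = 1 + fps_X * (\<Sum>j \<in> {1..k}. F2143 j q [x])"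
proof (rule fps_ext)
  fix n
  show "fps_nth (F2143 k q [x]) n = fps_nth (1 + fps_X * (\<Sum>j \<in> {1..k}. F2143 j q [x])) n"
    using card_paths2143_start[of q x k "[]" n] assms
    by (simp add: F2143_eq_Abs_fps_card fps_sum_nth)
qed

lemma F2143_Cons_Cons_rec:
  assumes "1 \<le> q" and "2 \<le> x" and "2 \<le> g" and "g \<le> x + 1"
  shows "F2143 k q (x # g # \<gamma>) = F2143 (nat (x + 1 - g + int k)) q (g # \<gamma>)
     + (\<Sum>z \<in> {1..q - 1}. F2143 (nat (x + 1 - g)) z (g # \<gamma>))
     + fps_X * (\<Sum>j \<in> {1..k}. F2143 j q (x # g # \<gamma>))"
    (is "_ = ?rhs")
proof (rule fps_ext)
  fix n
  have shift: "g + int (nat (x + 1 - g + int k)) = x + int k + 1" "g + int (nat (x + 1 - g)) = x + 1"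
    using assms by simp_all
  have "fps_nth (\<Sum>z \<in> {1..q - 1}. F2143 (nat (x + 1 - g)) z (g # \<gamma>)) n
          = (\<Sum>z \<in> {1..q - 1}. int (card (paths2143 (g, x + 1, z) (g # \<gamma>) n)))"
    unfolding fps_sum_nth using assms by (intro sum.cong) (simp_all add: F2143_eq_Abs_fps_card shift)
  moreover have "(\<Sum>w \<in> {w \<in> suc2143 (x, x + int k, q). recorded2143 (x, x + int k, q) w}.
                    card (paths2143 w (g # \<gamma>) n))
       = card (paths2143 (g, x + int k + 1, q) (g # \<gamma>) n) + (\<Sum>z \<in> {1..q - 1}. card (paths2143 (g, x + 1, z) (g # \<gamma>) n))"
    using assms by (intro sum_recorded_succs2143) (auto simp: paths2143_eq_empty)
  ultimately show "fps_nth (F2143 k q (x # g # \<gamma>)) n = fps_nth ?rhs n"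
    using card_paths2143_start[of q x k "g # \<gamma>" n] assms
    by (simp add: F2143_eq_Abs_fps_card fps_sum_nth shift ac_simps)
qed

lemma fps_ones_mult_one_minus_X: "Abs_fps (\<lambda>_. 1) * (1 - fps_X) = (1 :: 'a::ring_1 fps)"
  by (rule fps_ext) (simp add: algebra_simps)

lemma fps_X_sum_recurrence:
  fixes A B :: "nat \<Rightarrow> 'a::comm_ring_1 fps"
  assumes rec: "\<And>k. A k = B k + fps_X * (\<Sum>j \<in> {1..k}. A j)"
  shows "A (Suc k) = Abs_fps (\<lambda>_. 1) * (A k + B (Suc k) - B k)"
proof -
  have "A (Suc k) - A k = B (Suc k) - B k + fps_X * A (Suc k)"
    using rec[of "Suc k"] rec[of k] by (simp add: algebra_simps)
  then have "A k + B (Suc k) - B k = (1 - fps_X) * A (Suc k)"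
    by (simp add: algebra_simps)
  then show ?thesis
    by (simp add: mult.assoc[symmetric] fps_ones_mult_one_minus_X)
qed

lemma F2143_singleton:
  assumes "1 \<le> q" and "2 \<le> x"
  shows "F2143 k q [x] = s2143 ^ k"
proof (induction k)
  case 0
  show ?case using F2143_singleton_rec[OF assms, of 0] by simp
next
  case (Suc k)
  have "F2143 (Suc k) q [x] = s2143 * F2143 k q [x]"
    using fps_X_sum_recurrence[where B = "\<lambda>_. 1", OF F2143_singleton_rec[OF assms]]
    by (simp add: s2143_def)
  with Suc.IH show ?case by simp
qed

lemma F2143_Cons_Cons_0_eq_sum:
  assumes "2 \<le> x" and "2 \<le> g" and "g \<le> x + 1"
  shows "F2143 0 q (x # g # \<gamma>) = (\<Sum>z \<in> {1..q}. F2143 (nat (x + 1 - g)) z (g # \<gamma>))"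
proof (cases "1 \<le> q")
  case True
  then have "{1..q} = insert q {1..q - 1}" by auto
  with True show ?thesis
    using F2143_Cons_Cons_rec[OF True assms, of 0 \<gamma>] by (simp add: add.commute)
qed (simp add: F2143_def)

lemma F2143_Cons_Cons_0:
  assumes "1 \<le> q" and "2 \<le> x" and "2 \<le> g" and "g \<le> x + 1"
  shows "F2143 0 q (x # g # \<gamma>) = F2143 0 (q - 1) (x # g # \<gamma>) + F2143 (nat (x + 1 - g)) q (g # \<gamma>)"
proof -
  have "{1..q} = insert q {1..q - 1}" using assms(1) by auto
  then show ?thesis
    unfolding F2143_Cons_Cons_0_eq_sum[OF assms(2-4)] by (simp add: add.commute)
qed

lemma F2143_Cons_Cons_Suc:
  assumes "1 \<le> q" and "2 \<le> x" and "2 \<le> g" and "g \<le> x + 1"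
  shows "F2143 (Suc k) q (x # g # \<gamma>) = s2143 * F2143 k q (x # g # \<gamma>)
           + s2143 * F2143 (nat (x + 1 - g + int (Suc k))) q (g # \<gamma>)
           - s2143 * F2143 (nat (x + 1 - g + int k)) q (g # \<gamma>)"
  using fps_X_sum_recurrence[OF F2143_Cons_Cons_rec[OF assms]]
  by (simp add: s2143_def algebra_simps)

theorem lemma3p4:
  fixes k :: nat and q :: int and \<gamma> :: "int list"
  assumes "q \<ge> 1" and "\<gamma> \<noteq> []" and "\<gamma> ! 0 \<ge> 2"
    and "\<forall>i. Suc i < length \<gamma> \<longrightarrow> 2 \<le> \<gamma> ! Suc i \<and> \<gamma> ! Suc i \<le> \<gamma> ! i + 1"
  shows "F2143 k q \<gamma> =
    (if length \<gamma> = 1 then s2143 ^ k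
     else if k = 0 then
       F2143 0 (q - 1) \<gamma> + F2143 (nat (\<gamma> ! 0 + 1 - \<gamma> ! 1)) q (tl \<gamma>)
     else
       s2143 * F2143 (k - 1) q \<gamma>
       + s2143 * F2143 (nat (\<gamma> ! 0 + 1 - \<gamma> ! 1 + int k)) q (tl \<gamma>)
       - s2143 * F2143 (nat (\<gamma> ! 0 - \<gamma> ! 1 + int k)) q (tl \<gamma>))"
proof -
  obtain x \<gamma>' where \<gamma>: "\<gamma> = x # \<gamma>'" and x: "2 \<le> x"
    using assms(2,3) by (cases \<gamma>) auto
  show ?thesis
  proof (cases \<gamma>')
    case Nil
    then show ?thesis using \<gamma> F2143_singleton[OF assms(1) x] by simp
  next
    case (Cons g \<gamma>'')
    then have g: "2 \<le> g" "g \<le> x + 1"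
      using assms(4)[rule_format, of 0] \<gamma> by auto
    show ?thesis
    proof (cases k)
      case 0
      then show ?thesis using F2143_Cons_Cons_0[OF assms(1) x g] \<gamma> Cons by simp
    next
      case (Suc k')
      have "nat (x + 1 - g + int k') = nat (x - g + int k)" using Suc by simp
      with F2143_Cons_Cons_Suc[OF assms(1) x g, of k' \<gamma>''] show ?thesis
        using \<gamma> Cons Suc by simp
    qed
  qed
qed

end
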